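(* Let $I=\langle K,f,f',s,t,P\rangle$ be an instance of \textsc{Sub-STS} where $K=(V,E)$ is a complete graph, $P\subseteq V$, $f(s)=f'(t)=0$, $f(v)\neq 0$ for all $v\neq s$, and $f'(v)\neq 0$ for all $v\neq t$, and where $f$ and $f'$ color the same number of vertices with each color. Let $R=\{v\in V\mid f(v)\neq f'(v)\}\cup\{s,t\}\cup P$, and let $D$ be the directed multigraph (self-loops and parallel edges allowed) with vertex set $\{f(v)\mid v\in R\}$ and edge multiset $\{(f(v),f'(v))\mid v\in R\}$ (one edge per $v\in R$). Let $\mathrm{cc}(D)$ be the number of connected components of $D$. Then $\lambda(I)\ge |R|+\mathrm{cc}(D)-2$.
   Context: Colorings are arbitrary maps from $V$ to a set of colors. A swapping sequence of length $p-1$ from $f$ to $f'$ is a sequence $\langle f_1,\dots,f_p\rangle$ of colorings with $f_1=f$, $f_p=f'$, together with a walk $\langle w_1,\dots,w_p\rangle$ such that for $2\le i\le p$, $f_i$ is obtained from $f_{i-1}$ by swapping the colors of $w_{i-1}$ and $w_i$ (other vertices unchanged). For an instance $I=\langle G,f,f',s,t,P\rangle$ of \textsc{Sub-STS}, $\lambda(I)$ is the minimum length of a swapping sequence from $f$ to $f'$ whose walk $\langle w_1,\dots,w_m\rangle$ satisfies $w_1=s$, $w_m=t$ and $P\subseteq\{w_1,\dots,w_m\}$, and $\infty$ if none exists. *)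

theory Defs
  imports Main "HOL-Library.Extended_Nat"
begin

definition swap_col :: "('a \<Rightarrow> 'c) \<Rightarrow> 'a \<Rightarrow> 'a \<Rightarrow> ('a \<Rightarrow> 'c)" where
  "swap_col g u v = g(u := g v, v := g u)"

definition is_walk :: "'a set \<Rightarrow> ('a \<Rightarrow> 'a \<Rightarrow> bool) \<Rightarrow> 'a list \<Rightarrow> bool" where
  "is_walk V E ws \<longleftrightarrow> ws \<noteq> [] \<and> set ws \<subseteq> V \<and>
     (\<forall>i. Suc i < length ws \<longrightarrow> E (ws ! i) (ws ! Suc i))"

text \<open>A swapping sequence <f_1..f_p> with walk <w_1..w_p> from f to f'
  (colourings compared on the vertex set V); its length is p-1.\<close>
definition swapping_seq :: "'a set \<Rightarrow> ('a \<Rightarrow> 'a \<Rightarrow> bool) \<Rightarrow> ('a \<Rightarrow> 'c) \<Rightarrow> ('a \<Rightarrow> 'c)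
    \<Rightarrow> ('a \<Rightarrow> 'c) list \<Rightarrow> 'a list \<Rightarrow> bool" where
  "swapping_seq V E f f' fs ws \<longleftrightarrow>
     is_walk V E ws \<and> length fs = length ws \<and>
     (\<forall>v\<in>V. hd fs v = f v) \<and> (\<forall>v\<in>V. last fs v = f' v) \<and>
     (\<forall>i. Suc i < length fs \<longrightarrow>
        fs ! Suc i = swap_col (fs ! i) (ws ! i) (ws ! Suc i))"

text \<open>lambda(I) for the Sub-STS instance <(V,E),f,f',s,t,P>; infinity if no sequence exists.\<close>
definition sub_sts_lambda :: "'a set \<Rightarrow> ('a \<Rightarrow> 'a \<Rightarrow> bool) \<Rightarrow> ('a \<Rightarrow> 'c) \<Rightarrow> ('a \<Rightarrow> 'c)
    \<Rightarrow> 'a \<Rightarrow> 'a \<Rightarrow> 'a set \<Rightarrow> enat" where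
  "sub_sts_lambda V E f f' s t P =
     Inf {enat (length ws - 1) | fs ws. swapping_seq V E f f' fs ws \<and>
            hd ws = s \<and> last ws = t \<and> P \<subseteq> set ws}"

definition D_edges :: "('a \<Rightarrow> 'c) \<Rightarrow> ('a \<Rightarrow> 'c) \<Rightarrow> 'a set \<Rightarrow> ('c \<times> 'c) set" where
  "D_edges f f' R = {(f v, f' v) | v. v \<in> R}"

definition D_cc :: "('a \<Rightarrow> 'c) \<Rightarrow> ('a \<Rightarrow> 'c) \<Rightarrow> 'a set \<Rightarrow> nat" where
  "D_cc f f' R = card ((\<lambda>a. {b \<in> f ` R. (a, b) \<in> (D_edges f f' R \<union> (D_edges f f' R)\<inverse>)\<^sup>*}) ` (f ` R))"

end

theory Submission
  imports Defs
begin

text \<open>Consider |R| + cc(D) for the current colouring g, with the current position b of the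
  walk in place of s and with the vertices of P not yet visited. A swap along (b, w) lowers it
  by at most one. Colours change only at b and w, so every edge of the new graph joins colours
  that are connected in D plus one extra edge between g b and g w, which merges at most two
  components. And R loses at most the vertex b, in which case g w = f' b, so that the extra
  edge is already an edge of D. When the walk ends at t the colouring is f', R = {t}, and the
  quantity is at most 2.\<close>

definition wconn :: "('c \<times> 'c) set \<Rightarrow> ('c \<times> 'c) set" where
  "wconn A = (A \<union> A\<inverse>)\<^sup>*"

definition n_components :: "'c set \<Rightarrow> ('c \<times> 'c) set \<Rightarrow> nat" where
  "n_components S A = card ((\<lambda>a. {b \<in> S. (a, b) \<in> wconn A}) ` S)"

lemma D_cc_eq_n_components: "D_cc f f' R = n_components (f ` R) (D_edges f f' R)"
  by (simp add: D_cc_def n_components_def wconn_def)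

lemma wconn_refl [simp]: "(a, a) \<in> wconn A"
  by (simp add: wconn_def)

lemma wconn_sym: "(a, b) \<in> wconn A \<Longrightarrow> (b, a) \<in> wconn A"
  unfolding wconn_def by (rule symD[OF sym_rtrancl[OF sym_Un_converse]])

lemma wconn_trans: "(a, b) \<in> wconn A \<Longrightarrow> (b, c) \<in> wconn A \<Longrightarrow> (a, c) \<in> wconn A"
  unfolding wconn_def by (rule rtrancl_trans)

lemma wconn_edge: "(a, b) \<in> A \<Longrightarrow> (a, b) \<in> wconn A"
  unfolding wconn_def by blast

lemma wconn_subset_wconn: "A \<subseteq> wconn B \<Longrightarrow> wconn A \<subseteq> wconn B"
  unfolding wconn_def by (rule rtrancl_subset_rtrancl) (auto intro: wconn_sym[unfolded wconn_def])

lemma wconn_mono: "A \<subseteq> B \<Longrightarrow> wconn A \<subseteq> wconn B"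
  by (rule wconn_subset_wconn) (auto intro: wconn_edge)

lemma wconn_insertE:
  assumes "(x, y) \<in> wconn (insert (u, v) A)"
  obtains "(x, y) \<in> wconn A"
    | "(x, u) \<in> wconn A" "(v, y) \<in> wconn A"
    | "(x, v) \<in> wconn A" "(u, y) \<in> wconn A"
proof -
  have "(x, y) \<in> wconn A \<or> (x, u) \<in> wconn A \<and> (v, y) \<in> wconn A
      \<or> (x, v) \<in> wconn A \<and> (u, y) \<in> wconn A"
    using assms unfolding wconn_def[of "insert (u, v) A"]
  proof (induction rule: rtrancl_induct)
    case (step y z)
    from step.hyps(2) have "(y, z) \<in> wconn A \<or> (y, z) = (u, v) \<or> (y, z) = (v, u)"
      by (auto intro: wconn_edge wconn_sym)
    with step.IH show ?case
      by (auto intro: wconn_trans)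
  qed simp
  then show thesis using that by blast
qed

lemma wconn_class_eq:
  "(a, a') \<in> wconn A \<Longrightarrow> {b \<in> S. (a, b) \<in> wconn A} = {b \<in> S. (a', b) \<in> wconn A}"
  by (blast intro: wconn_trans wconn_sym)

lemma card_image_le_card_image:
  assumes "finite A" "\<And>x y. x \<in> A \<Longrightarrow> y \<in> A \<Longrightarrow> g x = g y \<Longrightarrow> f x = f y"
  shows "card (f ` A) \<le> card (g ` A)"
proof (rule surj_card_le)
  show "f ` A \<subseteq> (f \<circ> inv_into A g) ` g ` A"
  proof
    fix z assume "z \<in> f ` A"
    then obtain x where "x \<in> A" "z = f x" by blast
    then have "z = (f \<circ> inv_into A g) (g x)"
      using assms(2) inv_into_into f_inv_into_f by (metis comp_apply image_eqI)
    then show "z \<in> (f \<circ> inv_into A g) ` g ` A" using \<open>x \<in> A\<close> by blast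
  qed
qed (use assms in simp)

lemma n_components_le_card: "finite S \<Longrightarrow> n_components S A \<le> card S"
  unfolding n_components_def by (rule card_image_le)

lemma n_components_mono:
  assumes "finite S'" and "A' \<subseteq> wconn A" and "\<And>a. a \<in> S \<Longrightarrow> \<exists>a'\<in>S'. (a, a') \<in> wconn A"
  shows "n_components S A \<le> n_components S' A'"
proof -
  let ?K = "\<lambda>a. {b \<in> S. (a, b) \<in> wconn A}"
  let ?K' = "\<lambda>a. {b \<in> S'. (a, b) \<in> wconn A'}"
  have "?K ` S \<subseteq> ?K ` S'"
  proof (rule image_subsetI)
    fix a assume "a \<in> S"
    with assms(3) obtain a' where "a' \<in> S'" "(a, a') \<in> wconn A" by blast
    then show "?K a \<in> ?K ` S'" by (simp add: wconn_class_eq)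
  qed
  then have "card (?K ` S) \<le> card (?K ` S')"
    using assms(1) by (simp add: card_mono)
  also have "\<dots> \<le> card (?K' ` S')"
  proof (rule card_image_le_card_image[OF assms(1)])
    fix x y assume "x \<in> S'" "y \<in> S'" "?K' x = ?K' y"
    then have "y \<in> ?K' x" by simp
    then have "(x, y) \<in> wconn A" using wconn_subset_wconn[OF assms(2)] by blast
    then show "?K x = ?K y" by (rule wconn_class_eq)
  qed
  finally show ?thesis unfolding n_components_def .
qed

lemma n_components_insert_le:
  assumes "finite S"
  shows "n_components S A \<le> n_components S (insert (u, v) A) + 1"
proof -
  let ?K = "\<lambda>a. {b \<in> S. (a, b) \<in> wconn A}"
  let ?K' = "\<lambda>a. {b \<in> S. (a, b) \<in> wconn (insert (u, v) A)}"
  \<comment> \<open>Apart from the class of v, the new edge merges no two classes.\<close>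
  define S0 where "S0 = {a \<in> S. (v, a) \<notin> wconn A}"
  have "finite S0" using assms by (simp add: S0_def)
  have "?K ` S \<subseteq> insert (?K v) (?K ` S0)"
  proof (rule image_subsetI)
    fix a assume "a \<in> S"
    show "?K a \<in> insert (?K v) (?K ` S0)"
    proof (cases "(v, a) \<in> wconn A")
      case True
      then have "?K a = ?K v" by (rule wconn_class_eq[OF wconn_sym])
      then show ?thesis by simp
    next
      case False
      then show ?thesis using \<open>a \<in> S\<close> by (simp add: S0_def)
    qed
  qed
  then have "card (?K ` S) \<le> card (insert (?K v) (?K ` S0))"
    using \<open>finite S0\<close> by (intro card_mono) auto
  also have "\<dots> \<le> card (?K ` S0) + 1"
    using \<open>finite S0\<close> by (simp add: card_insert_if)
  also have "card (?K ` S0) \<le> card (?K' ` S0)"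
  proof (rule card_image_le_card_image[OF \<open>finite S0\<close>])
    fix x y assume "x \<in> S0" "y \<in> S0" and same_class: "?K' x = ?K' y"
    have "y \<in> ?K' y" using \<open>y \<in> S0\<close> by (simp add: S0_def)
    then have "(x, y) \<in> wconn (insert (u, v) A)" unfolding same_class[symmetric] by simp
    moreover have "(v, y) \<notin> wconn A" "(x, v) \<notin> wconn A"
      using \<open>x \<in> S0\<close> \<open>y \<in> S0\<close> wconn_sym[of x v A] by (auto simp: S0_def)
    ultimately have "(x, y) \<in> wconn A" by (blast elim: wconn_insertE)
    then show "?K x = ?K y" by (rule wconn_class_eq)
  qed
  also have "\<dots> \<le> card (?K' ` S)"
    using assms by (intro card_mono) (auto simp: S0_def)
  finally show ?thesis unfolding n_components_def by simp
qed

lemma swap_col_apply [simp]: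
  "swap_col g u v u = g v" "swap_col g u v v = g u"
  "x \<noteq> u \<Longrightarrow> x \<noteq> v \<Longrightarrow> swap_col g u v x = g x"
  by (simp_all add: swap_col_def)

definition relevant_vertices ::
    "'a set \<Rightarrow> ('a \<Rightarrow> 'c) \<Rightarrow> ('a \<Rightarrow> 'c) \<Rightarrow> 'a \<Rightarrow> 'a \<Rightarrow> 'a set \<Rightarrow> 'a set" where
  "relevant_vertices V g f' s t P = {v \<in> V. g v \<noteq> f' v} \<union> {s, t} \<union> P"

definition potential :: "('a \<Rightarrow> 'c) \<Rightarrow> ('a \<Rightarrow> 'c) \<Rightarrow> 'a set \<Rightarrow> nat" where
  "potential g f' R = card R + n_components (g ` R) (D_edges g f' R)"

lemma potential_swap_le:
  fixes g f' :: "'a \<Rightarrow> 'c"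
  assumes "finite V" "b \<in> V" "w \<in> V" "t \<in> V" "P \<subseteq> V"
  defines "g' \<equiv> swap_col g b w"
  defines "R \<equiv> relevant_vertices V g f' b t P"
    and "R' \<equiv> relevant_vertices V g' f' w t (P - {b})"
  shows "potential g f' R \<le> potential g' f' R' + 1"
proof -
  define D where "D = D_edges g f' R"
  define X where "X = insert (g b, g w) D"
  have "R \<subseteq> V" "R' \<subseteq> V"
    using assms(2-5) by (auto simp: R_def R'_def relevant_vertices_def)
  then have "finite R" "finite R'"
    using assms(1) finite_subset by auto
  have "b \<in> R" "w \<in> R'"
    by (simp_all add: R_def R'_def relevant_vertices_def)
  have R_subset: "R \<subseteq> insert b R'"
    by (auto simp: R_def R'_def relevant_vertices_def g'_def)
  then have "card R \<le> card (insert b R')"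
    using \<open>finite R'\<close> by (intro card_mono) auto
  then have card_R: "card R \<le> card R' + (if b \<in> R' then 0 else 1)"
    using \<open>finite R'\<close> by (simp add: card_insert_if split: if_splits)
  have settled: "(g v, f' v) \<in> wconn D" if "v \<in> V" for v
  proof (cases "g v = f' v")
    case False
    with that have "v \<in> R" by (simp add: R_def relevant_vertices_def)
    then show ?thesis by (auto simp: D_def D_edges_def intro: wconn_edge)
  qed simp
  have "wconn D \<subseteq> wconn X"
    by (rule wconn_mono) (auto simp: X_def)
  have "(g b, g w) \<in> wconn X"
    by (simp add: X_def wconn_edge)
  then have swapped: "(g' v, g v) \<in> wconn X" for v
    using wconn_sym[of "g b" "g w"] by (cases "v = b"; cases "v = w") (simp_all add: g'_def)
  have n_D: "n_components (g ` R) D \<le> n_components (g ` R) X + (if b \<in> R' then 1 else 0)"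
  proof (cases "b \<in> R'")
    case False
    then have "g w = f' b"
      using assms(2) by (simp add: R'_def relevant_vertices_def g'_def)
    then have "X = D"
      using \<open>b \<in> R\<close> by (auto simp: X_def D_def D_edges_def)
    then show ?thesis by simp
  qed (use n_components_insert_le[of "g ` R" D] \<open>finite R\<close> in \<open>simp add: X_def\<close>)
  have n_X: "n_components (g ` R) X \<le> n_components (g' ` R') (D_edges g' f' R')"
  proof (rule n_components_mono)
    show "finite (g' ` R')" using \<open>finite R'\<close> by simp
    show "D_edges g' f' R' \<subseteq> wconn X"
    proof
      fix e assume "e \<in> D_edges g' f' R'"
      then obtain v where "v \<in> R'" "e = (g' v, f' v)" by (auto simp: D_edges_def)
      then have "(g v, f' v) \<in> wconn X"
        using settled[of v] \<open>R' \<subseteq> V\<close> \<open>wconn D \<subseteq> wconn X\<close> by blast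
      then show "e \<in> wconn X"
        using wconn_trans[OF swapped[of v]] \<open>e = (g' v, f' v)\<close> by simp
    qed
  next
    fix a assume "a \<in> g ` R"
    then obtain v where "v \<in> R" "a = g v" by blast
    show "\<exists>a'\<in>g' ` R'. (a, a') \<in> wconn X"
    proof (cases "v = b")
      case True
      then have "a = g' w" by (simp add: \<open>a = g v\<close> g'_def)
      then show ?thesis using \<open>w \<in> R'\<close> by (intro bexI[of _ "g' w"]) simp_all
    next
      case False
      then have "v \<in> R'" using \<open>v \<in> R\<close> R_subset by blast
      then show ?thesis using wconn_sym[OF swapped[of v]] \<open>a = g v\<close> by blast
    qed
  qed
  show ?thesis
    using card_R n_D n_X by (simp add: potential_def D_def split: if_splits)
qed

lemma swapping_seq_singleton:
  assumes "swapping_seq V E f f' fs [b]" "v \<in> V"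
  shows "f v = f' v"
  using assms by (cases fs) (auto simp: swapping_seq_def)

lemma swapping_seq_tl:
  assumes "swapping_seq V E f f' fs (b # w # ws)"
  shows "swapping_seq V E (swap_col f b w) f' (tl fs) (w # ws)"
proof -
  obtain g h fs' where fs: "fs = g # h # fs'"
    using assms unfolding swapping_seq_def by (metis length_Suc_conv)
  have walk: "is_walk V E (b # w # ws)" and "\<forall>v\<in>V. g v = f v"
    and steps: "\<And>i. Suc i < length fs \<Longrightarrow>
      fs ! Suc i = swap_col (fs ! i) ((b # w # ws) ! i) ((b # w # ws) ! Suc i)"
    using assms by (auto simp: swapping_seq_def fs)
  have "b \<in> V" "w \<in> V" using walk by (auto simp: is_walk_def)
  have "h = swap_col g b w" using steps[of 0] by (simp add: fs)
  then have "\<forall>v\<in>V. h v = swap_col f b w v"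
    using \<open>\<forall>v\<in>V. g v = f v\<close> \<open>b \<in> V\<close> \<open>w \<in> V\<close> by (simp add: swap_col_def)
  moreover have "is_walk V E (w # ws)"
    using walk unfolding is_walk_def
    by (metis Suc_less_eq length_Cons list.discI nth_Cons_Suc set_subset_Cons subset_trans)
  ultimately show ?thesis
    using assms steps[of "Suc i" for i] by (auto simp: swapping_seq_def fs)
qed

lemma potential_le_length:
  assumes "swapping_seq V E f f' fs (b # ws)" "finite V" "P \<subseteq> set (b # ws)"
  shows "potential f f' (relevant_vertices V f f' b (last (b # ws)) P) \<le> length ws + 2"
  using assms
proof (induction ws arbitrary: f fs b P)
  case Nil
  then have "b \<in> V" by (simp add: swapping_seq_def is_walk_def)
  then have "relevant_vertices V f f' b b P = {b}"
    using Nil swapping_seq_singleton[OF Nil.prems(1)] by (auto simp: relevant_vertices_def)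
  then show ?case
    using n_components_le_card[of "f ` {b}"] by (simp add: potential_def)
next
  case (Cons w ws)
  have "set (b # w # ws) \<subseteq> V"
    using Cons.prems(1) by (simp add: swapping_seq_def is_walk_def)
  then have "potential f f' (relevant_vertices V f f' b (last (w # ws)) P)
      \<le> potential (swap_col f b w) f'
          (relevant_vertices V (swap_col f b w) f' w (last (w # ws)) (P - {b})) + 1"
    using Cons.prems by (intro potential_swap_le) auto
  also have "\<dots> \<le> length ws + 3"
  proof -
    have "P - {b} \<subseteq> set (w # ws)" using Cons.prems(3) by auto
    from Cons.IH[OF swapping_seq_tl[OF Cons.prems(1)] Cons.prems(2) this] show ?thesis by simp
  qed
  finally show ?case by simp
qed

theorem lemma5:
  fixes V :: "'a set" and E :: "'a \<Rightarrow> 'a \<Rightarrow> bool"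
    and f f' :: "'a \<Rightarrow> 'c::zero" and s t :: 'a and P :: "'a set"
  assumes "finite V"
    and complete: "\<And>u v. E u v \<longleftrightarrow> u \<in> V \<and> v \<in> V \<and> u \<noteq> v"
    and "s \<in> V" "t \<in> V" "P \<subseteq> V"
    and "f s = 0" "f' t = 0"
    and "\<And>v. v \<in> V \<Longrightarrow> v \<noteq> s \<Longrightarrow> f v \<noteq> 0"
    and "\<And>v. v \<in> V \<Longrightarrow> v \<noteq> t \<Longrightarrow> f' v \<noteq> 0"
    and "\<And>c. card {v \<in> V. f v = c} = card {v \<in> V. f' v = c}"
    and R_def: "R = {v \<in> V. f v \<noteq> f' v} \<union> {s, t} \<union> P"
  shows "enat (card R + D_cc f f' R - 2) \<le> sub_sts_lambda V E f f' s t P"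
proof -
  have "card R + D_cc f f' R - 2 \<le> length ws - 1"
    if seq: "swapping_seq V E f f' fs ws" and ends: "hd ws = s" "last ws = t"
      and visits: "P \<subseteq> set ws" for fs ws
  proof -
    obtain ws' where ws: "ws = s # ws'"
      using seq ends by (cases ws) (auto simp: swapping_seq_def is_walk_def)
    have "potential f f' (relevant_vertices V f f' s t P) \<le> length ws' + 2"
      using potential_le_length[of V E f f' fs s ws' P] seq ends visits \<open>finite V\<close>
      by (simp add: ws)
    then show ?thesis
      by (simp add: ws potential_def relevant_vertices_def R_def D_cc_eq_n_components)
  qed
  then show ?thesis
    unfolding sub_sts_lambda_def by (auto intro!: Inf_greatest)
qed

end
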